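(* Let $\mathcal{N}=(D,P)$ be a broadcast network with client $P=(Q,I,\delta)$, let $F\subseteq Q$, and let $c_0$ be a configuration. There is a fair computation starting from $c_0$ if and only if there is a configuration $c$ with $c_0\to^* c$ and $c\Rightarrow_F c$.
   Context: A broadcast network is a pair $\mathcal{N}=(D,P)$ where $D$ is a finite set of messages and $P=(Q,I,\delta)$ is a finite automaton with $\delta\subseteq Q\times\mathrm{Ops}(D)\times Q$, $\mathrm{Ops}(D)=\{!a,\ ?a: a\in D\}$. A configuration is $c\in Q^k$ for some $k$, with entries $c[i]$. For $c,c'\in Q^k$ and $a\in D$, $c\xrightarrow{a}c'$ holds if there is $i$ with $(c[i],!a,c'[i])\in\delta$, a set $R\subseteq[1..k]\setminus\{i\}$ with $(c[j],?a,c'[j])\in\delta$ for $j\in R$, and $c[j]=c'[j]$ for $j\notin R\cup\{i\}$; then $\mathrm{type}(c\xrightarrow{a}c')=R\cup\{i\}$. $\to^*$ denotes zero or more transitions. For an infinite computation $\pi=c_0\to c_1\to\cdots$, $\mathrm{Inf}(\pi)=\{i: i\in\mathrm{type}(c_j\to c_{j+1})\text{ for infinitely many } j\}$ and $\mathrm{Fin}(\pi)=\{i: c_j[i]\in F\text{ for infinitely many } j\}$; $\pi$ is fair if $\mathrm{Inf}(\pi)\subseteq\mathrm{Fin}(\pi)$. A finite computation $c_1\to c_2\to\cdots\to c_n$ with $n\ge2$ is good for $F$, written $c_1\Rightarrow_F c_n$, if every client $i$ with $i\in\mathrm{type}(c_j\to c_{j+1})$ for some $j$ satisfies $c_k[i]\in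 F$ for some $k\in[1..n]$. *)

theory Defs
  imports Main
begin

datatype 'd op = Snd 'd | Rcv 'd

text \<open>A client automaton P = (Q, I, delta); a broadcast network (D, P).
 Clients are indexed 0..k-1 (the paper uses 1..k).\<close>
record ('q, 'd) client =
  states :: "'q set"
  init :: "'q set"
  delta :: "('q \<times> 'd op \<times> 'q) set"

definition network :: "'d set \<Rightarrow> ('q, 'd) client \<Rightarrow> bool" where
  "network D P \<longleftrightarrow> finite D \<and> finite (states P) \<and> init P \<subseteq> states P \<and>
     delta P \<subseteq> states P \<times> ((Snd ` D) \<union> (Rcv ` D)) \<times> states P"

definition is_config :: "('q, 'd) client \<Rightarrow> 'q list \<Rightarrow> bool" where
  "is_config P c \<longleftrightarrow> set c \<subseteq> states P"

definition step :: "'d set \<Rightarrow> ('q, 'd) client \<Rightarrow> 'q list \<Rightarrow> 'd \<Rightarrow> nat set \<Rightarrow> 'q list \<Rightarrow> bool" where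
  "step D P c a T c' \<longleftrightarrow> a \<in> D \<and> length c' = length c \<and>
     (\<exists>i R. i < length c \<and> R \<subseteq> {..<length c} - {i} \<and> T = R \<union> {i} \<and>
        (c ! i, Snd a, c' ! i) \<in> delta P \<and>
        (\<forall>j\<in>R. (c ! j, Rcv a, c' ! j) \<in> delta P) \<and>
        (\<forall>j<length c. j \<notin> T \<longrightarrow> c ! j = c' ! j))"

definition step_any :: "'d set \<Rightarrow> ('q, 'd) client \<Rightarrow> 'q list \<Rightarrow> 'q list \<Rightarrow> bool" where
  "step_any D P c c' \<longleftrightarrow> (\<exists>a T. step D P c a T c')"

definition inf_comp :: "'d set \<Rightarrow> ('q, 'd) client \<Rightarrow> (nat \<Rightarrow> 'q list) \<Rightarrow> (nat \<Rightarrow> nat set) \<Rightarrow> bool" where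
  "inf_comp D P cs ts \<longleftrightarrow> (\<forall>j. \<exists>a. step D P (cs j) a (ts j) (cs (Suc j)))"

definition Inf_set :: "(nat \<Rightarrow> nat set) \<Rightarrow> nat set" where
  "Inf_set ts = {i. infinite {j. i \<in> ts j}}"

definition Fin_set :: "'q set \<Rightarrow> (nat \<Rightarrow> 'q list) \<Rightarrow> nat set" where
  "Fin_set F cs = {i. infinite {j. i < length (cs j) \<and> cs j ! i \<in> F}}"

definition fair :: "'q set \<Rightarrow> (nat \<Rightarrow> 'q list) \<Rightarrow> (nat \<Rightarrow> nat set) \<Rightarrow> bool" where
  "fair F cs ts \<longleftrightarrow> Inf_set ts \<subseteq> Fin_set F cs"

definition good :: "'d set \<Rightarrow> ('q, 'd) client \<Rightarrow> 'q set \<Rightarrow> 'q list \<Rightarrow> 'q list \<Rightarrow> bool" where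
  "good D P F c c' \<longleftrightarrow> (\<exists>n cs ts. n \<ge> 1 \<and> cs 0 = c \<and> cs n = c' \<and>
      (\<forall>j<n. \<exists>a. step D P (cs j) a (ts j) (cs (Suc j))) \<and>
      (\<forall>i. (\<exists>j<n. i \<in> ts j) \<longrightarrow> (\<exists>k\<le>n. cs k ! i \<in> F)))"

end

theory Submission
  imports Defs "HOL-Library.Infinite_Set"
begin

text \<open>A fair computation visits only finitely many configurations (the client has finitely
  many states, and the number of clients is fixed), and from some point on only
  clients in Inf_set take part in transitions. Cutting it between two visits of a configuration
  that recurs infinitely often, far enough apart that every client of Inf_set has been in F in
  between, yields a good cycle. Conversely, a good cycle repeated forever is fair, and fairness
  is insensitive to a finite prefix.\<close>

lemma infinite_Suc_iff: "infinite {j. Q (Suc j)} \<longleftrightarrow> infinite {j. Q j}"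
  unfolding INFM_iff_infinite[symmetric] frequently_def
  by (simp only: MOST_Suc_iff[of "\<lambda>j. \<not> Q j"])

lemma infinite_periodic:
  fixes n r :: nat
  assumes "0 < n" and "Q (r mod n)"
  shows "infinite {j. Q (j mod n)}"
  unfolding infinite_nat_iff_unbounded_le
proof
  fix m
  have "m \<le> r + n * m" using assms(1) by (simp add: trans_le_add2)
  moreover have "(r + n * m) mod n = r mod n" by simp
  ultimately show "\<exists>j\<ge>m. j \<in> {j. Q (j mod n)}" using assms(2) by auto
qed

lemma step_length: "step D P c a T c' \<Longrightarrow> length c' = length c"
  by (simp add: step_def)

lemma step_type_subset: "step D P c a T c' \<Longrightarrow> T \<subseteq> {..<length c}"
  unfolding step_def by auto

lemma step_preserves_states:
  assumes net: "network D P" and c: "set c \<subseteq> states P" and st: "step D P c a T c'"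
  shows "set c' \<subseteq> states P"
proof
  fix x assume "x \<in> set c'"
  then obtain m where m: "m < length c" "x = c' ! m"
    using step_length[OF st] by (auto simp: in_set_conv_nth)
  from st obtain i R where T: "T = R \<union> {i}" and snd: "(c ! i, Snd a, c' ! i) \<in> delta P"
    and rcv: "\<forall>j\<in>R. (c ! j, Rcv a, c' ! j) \<in> delta P"
    and idle: "\<forall>j<length c. j \<notin> T \<longrightarrow> c ! j = c' ! j"
    unfolding step_def by blast
  have "delta P \<subseteq> UNIV \<times> UNIV \<times> states P" using net unfolding network_def by blast
  moreover have "c ! m \<in> states P" using c m by auto
  ultimately show "x \<in> states P" using m T snd rcv idle by (cases "m \<in> T") auto
qed

lemma inf_comp_length: "inf_comp D P cs ts \<Longrightarrow> length (cs j) = length (cs 0)"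
  by (induction j) (metis inf_comp_def step_length)+

lemma inf_comp_types_subset: "inf_comp D P cs ts \<Longrightarrow> ts j \<subseteq> {..<length (cs 0)}"
  by (metis inf_comp_def inf_comp_length step_type_subset)

lemma inf_comp_states:
  "network D P \<Longrightarrow> set (cs 0) \<subseteq> states P \<Longrightarrow> inf_comp D P cs ts \<Longrightarrow> set (cs j) \<subseteq> states P"
  by (induction j) (metis inf_comp_def step_preserves_states)+

lemma inf_comp_reachable: "inf_comp D P cs ts \<Longrightarrow> (step_any D P)\<^sup>*\<^sup>* (cs 0) (cs j)"
proof (induction j)
  case (Suc j)
  then have "step_any D P (cs j) (cs (Suc j))" unfolding inf_comp_def step_any_def by blast
  with Suc show ?case by (simp add: rtranclp.rtrancl_into_rtrancl)
qed simp

lemma inf_comp_finite_configs: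
  assumes "network D P" and "set (cs 0) \<subseteq> states P" and "inf_comp D P cs ts"
  shows "finite (range cs)"
proof (rule finite_subset)
  show "range cs \<subseteq> {c. set c \<subseteq> states P \<and> length c = length (cs 0)}"
    using inf_comp_states[OF assms] inf_comp_length[OF assms(3)] by auto
  show "finite {c. set c \<subseteq> states P \<and> length c = length (cs 0)}"
    using assms(1) by (intro finite_lists_length_eq) (simp add: network_def)
qed

lemma eventually_types_subset_Inf_set:
  assumes "finite K" and "\<And>j. ts j \<subseteq> K"
  shows "\<exists>N. \<forall>j\<ge>N. ts j \<subseteq> Inf_set ts"
proof -
  have "\<forall>i\<in>K - Inf_set ts. MOST j. i \<notin> ts j"
    by (simp add: Inf_set_def MOST_iff_cofinite)
  then have "MOST j. \<forall>i\<in>K - Inf_set ts. i \<notin> ts j"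
    using assms(1) by (simp add: MOST_finite_Ball_distrib)
  then show ?thesis using assms(2) unfolding MOST_nat_le by blast
qed

lemma inf_comp_segment_good:
  assumes "inf_comp D P cs ts" and "j1 < j2"
    and "\<And>i j. j1 \<le> j \<Longrightarrow> j < j2 \<Longrightarrow> i \<in> ts j \<Longrightarrow> \<exists>k. j1 \<le> k \<and> k \<le> j2 \<and> cs k ! i \<in> F"
  shows "good D P F (cs j1) (cs j2)"
  unfolding good_def
proof (rule exI[of _ "j2 - j1"], rule exI[of _ "\<lambda>m. cs (j1 + m)"], rule exI[of _ "\<lambda>m. ts (j1 + m)"],
    intro conjI allI impI)
  show "1 \<le> j2 - j1" "cs (j1 + 0) = cs j1" "cs (j1 + (j2 - j1)) = cs j2"
    using assms(2) by simp_all
  show "\<exists>a. step D P (cs (j1 + j)) a (ts (j1 + j)) (cs (j1 + Suc j))" for j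
    using assms(1) unfolding inf_comp_def by (metis add_Suc_right)
  fix i assume "\<exists>j<j2 - j1. i \<in> ts (j1 + j)"
  then obtain j where "j < j2 - j1" "i \<in> ts (j1 + j)" by blast
  then obtain k where "j1 \<le> k" "k \<le> j2" "cs k ! i \<in> F"
    using assms(3)[of "j1 + j" i] by force
  then show "\<exists>k\<le>j2 - j1. cs (j1 + k) ! i \<in> F"
    by (intro exI[of _ "k - j1"]) auto
qed

lemma fair_imp_reachable_good_cycle:
  assumes net: "network D P" and c0: "set (cs 0) \<subseteq> states P"
    and comp: "inf_comp D P cs ts" and fair: "fair F cs ts"
  shows "\<exists>c. (step_any D P)\<^sup>*\<^sup>* (cs 0) c \<and> good D P F c c"
proof -
  obtain N where N: "\<And>j. N \<le> j \<Longrightarrow> ts j \<subseteq> Inf_set ts"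
    using eventually_types_subset_Inf_set[of "{..<length (cs 0)}" ts] inf_comp_types_subset[OF comp]
    by blast
  obtain c where recur: "INFM j. cs j = c"
    using inf_img_fin_dom[OF inf_comp_finite_configs[OF net c0 comp]]
    by (auto simp: INFM_iff_infinite vimage_def)
  then obtain j1 where j1: "N \<le> j1" "cs j1 = c" unfolding INFM_nat_le by blast
  have "finite (Inf_set ts)"
    using inf_comp_types_subset[OF comp] by (auto simp: Inf_set_def intro: finite_subset)
  moreover have "MOST j2. \<exists>k. j1 \<le> k \<and> k \<le> j2 \<and> cs k ! i \<in> F" if "i \<in> Inf_set ts" for i
  proof -
    have "INFM k. cs k ! i \<in> F"
      using fair that unfolding fair_def Fin_set_def INFM_iff_infinite
      by (auto elim: infinite_super[rotated])
    then obtain k where "j1 \<le> k" "cs k ! i \<in> F" unfolding INFM_nat_le by blast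
    then show ?thesis using MOST_ge_nat[of k] by (auto elim: MOST_mono)
  qed
  ultimately have "MOST j2. \<forall>i\<in>Inf_set ts. \<exists>k. j1 \<le> k \<and> k \<le> j2 \<and> cs k ! i \<in> F"
    by (simp add: MOST_finite_Ball_distrib)
  with recur have "INFM j2. cs j2 = c \<and> (\<forall>i\<in>Inf_set ts. \<exists>k. j1 \<le> k \<and> k \<le> j2 \<and> cs k ! i \<in> F)"
    by (rule INFM_conjI)
  then obtain j2 where j2: "j1 < j2" "cs j2 = c"
    and visits: "\<forall>i\<in>Inf_set ts. \<exists>k. j1 \<le> k \<and> k \<le> j2 \<and> cs k ! i \<in> F"
    unfolding INFM_nat by blast
  have "good D P F (cs j1) (cs j2)"
    using N j1(1) visits by (intro inf_comp_segment_good[OF comp j2(1)]) (meson le_trans subsetD)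
  then show ?thesis using inf_comp_reachable[OF comp] j1(2) j2(2) by auto
qed

lemma fair_prepend_step:
  assumes "step D P c a T (cs 0)" and "inf_comp D P cs ts" and "fair F cs ts"
  shows "inf_comp D P (case_nat c cs) (case_nat T ts) \<and> fair F (case_nat c cs) (case_nat T ts)"
proof
  show "inf_comp D P (case_nat c cs) (case_nat T ts)"
    using assms unfolding inf_comp_def by (auto split: nat.splits)
  have "Inf_set (case_nat T ts) = Inf_set ts"
    using infinite_Suc_iff[of "\<lambda>j. _ \<in> case_nat T ts j"] by (simp add: Inf_set_def)
  moreover have "Fin_set F (case_nat c cs) = Fin_set F cs"
    using infinite_Suc_iff[of "\<lambda>j. _ < length (case_nat c cs j) \<and> case_nat c cs j ! _ \<in> F"]
    by (simp add: Fin_set_def)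
  ultimately show "fair F (case_nat c cs) (case_nat T ts)" using assms(3) by (simp add: fair_def)
qed

lemma reachable_fair:
  assumes "(step_any D P)\<^sup>*\<^sup>* c c'" and "\<exists>cs ts. cs 0 = c' \<and> inf_comp D P cs ts \<and> fair F cs ts"
  shows "\<exists>cs ts. cs 0 = c \<and> inf_comp D P cs ts \<and> fair F cs ts"
  using assms(1)
proof (induction rule: converse_rtranclp_induct)
  case base
  show ?case using assms(2) .
next
  case (step y z)
  then obtain cs ts where "cs 0 = z" "inf_comp D P cs ts" "fair F cs ts" by blast
  moreover obtain a T where "step D P y a T z" using step(1) unfolding step_any_def by blast
  ultimately show ?case
    using fair_prepend_step[of D P y a T cs ts F]
    by (intro exI[of _ "case_nat y cs"] exI[of _ "case_nat T ts"]) simp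
qed

lemma good_cycle_fair:
  assumes "good D P F c c"
  shows "\<exists>cs ts. cs 0 = c \<and> inf_comp D P cs ts \<and> fair F cs ts"
proof -
  obtain n cs ts where "1 \<le> n" and cs0: "cs 0 = c" and csn: "cs n = c"
    and steps: "\<forall>j<n. \<exists>a. step D P (cs j) a (ts j) (cs (Suc j))"
    and visits: "\<forall>i. (\<exists>j<n. i \<in> ts j) \<longrightarrow> (\<exists>k\<le>n. cs k ! i \<in> F)"
    using assms unfolding good_def by blast
  then have n: "0 < n" by simp
  have cs_mod: "cs (k mod n) = cs k" if "k \<le> n" for k
    using that cs0 csn by (cases "k = n") simp_all
  let ?cs = "\<lambda>j. cs (j mod n)" and ?ts = "\<lambda>j. ts (j mod n)"
  have comp: "inf_comp D P ?cs ?ts"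
    unfolding inf_comp_def
  proof
    fix j
    have "j mod n < n" using n by simp
    then have "cs (Suc j mod n) = cs (Suc (j mod n))"
      using cs_mod[of "Suc (j mod n)"] by (simp add: mod_Suc_eq)
    then show "\<exists>a. step D P (?cs j) a (?ts j) (?cs (Suc j))"
      using steps \<open>j mod n < n\<close> by simp
  qed
  have "i \<in> Fin_set F ?cs" if "i \<in> Inf_set ?ts" for i
  proof -
    have "infinite {j. i \<in> ts (j mod n)}" using that by (simp add: Inf_set_def)
    then obtain j where j: "i \<in> ts (j mod n)" using not_finite_existsD by blast
    moreover have "j mod n < n" using n by simp
    ultimately obtain k where k: "k \<le> n" "cs k ! i \<in> F" using visits by blast
    have "\<forall>j. i < length (?cs j)"
      using j inf_comp_types_subset[OF comp, of j] inf_comp_length[OF comp] by auto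
    then show ?thesis
      using infinite_periodic[OF n, of "\<lambda>x. cs x ! i \<in> F" k] k cs_mod
      by (simp add: Fin_set_def)
  qed
  then have "fair F ?cs ?ts" unfolding fair_def by blast
  then show ?thesis using comp cs0 by (intro exI[of _ ?cs] exI[of _ ?ts]) simp
qed

theorem lemma6:
  fixes D :: "'d set" and P :: "('q, 'd) client" and F :: "'q set" and c0 :: "'q list"
  assumes "network D P" and "F \<subseteq> states P" and "is_config P c0"
  shows "(\<exists>cs ts. cs 0 = c0 \<and> inf_comp D P cs ts \<and> fair F cs ts) \<longleftrightarrow>
         (\<exists>c. (step_any D P)\<^sup>*\<^sup>* c0 c \<and> good D P F c c)"
proof
  assume "\<exists>cs ts. cs 0 = c0 \<and> inf_comp D P cs ts \<and> fair F cs ts"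
  then show "\<exists>c. (step_any D P)\<^sup>*\<^sup>* c0 c \<and> good D P F c c"
    using fair_imp_reachable_good_cycle[OF assms(1)] assms(3) unfolding is_config_def by blast
next
  assume "\<exists>c. (step_any D P)\<^sup>*\<^sup>* c0 c \<and> good D P F c c"
  then show "\<exists>cs ts. cs 0 = c0 \<and> inf_comp D P cs ts \<and> fair F cs ts"
    using good_cycle_fair reachable_fair by blast
qed

end
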